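(* Let $A$ be a Lie conformal algebra, $M$ an $A$-module and $k\ge1$. If one of $a_1,\dots,a_k\in A$ is a torsion element of the $\mathbb F[\partial]$-module $A$, then $a_1\otimes\cdots\otimes a_k\otimes\phi=0$ in $\tilde\Gamma_k(A,M)$ for every $\phi$. In particular $\tilde\Gamma_k$ can be identified with the quotient of $\bar A^{\otimes k}\otimes\mathrm{Hom}(\mathbb F[\lambda_1,\dots,\lambda_k],M)$ by the relations (C1), (C2), where $\bar A=A/\mathrm{Tor}\,A$.
   Context: $\mathbb F$ field of characteristic 0; $A$ a Lie conformal algebra, $M$ an $A$-module (with $\partial$ acting on $M$ as $\partial^M$). $\mathrm{Hom}(\mathbb F[\lambda_1,\dots,\lambda_k],M)$ denotes the $\mathbb F$-linear maps. For $\phi$ in it, $\lambda_i^*\phi$ is $f\mapsto\phi(\lambda_if)$ and, for $\sigma\in S_k$, $\sigma^*\phi$ is $f(\lambda_1,\dots,\lambda_k)\mapsto\phi(f(\lambda_{\sigma(1)},\dots,\lambda_{\sigma(k)}))$. The space of basic $k$-chains $\tilde\Gamma_k(A,M)$ is the quotient of $A^{\otimes k}\otimes\mathrm{Hom}(\mathbb F[\lambda_1,\dots,\lambda_k],M)$ by the relations (C1) $a_1\otimes\cdots\otimes\partial a_i\otimes\cdots\otimes a_k\otimes\phi=-a_1\otimes\cdots\otimes a_k\otimes\lambda_i^*\phi$; (C2) $a_{\sigma(1)}\otimes\cdots\otimes a_{\sigma(k)}\otimes\sigma^*\phi=\mathrm{sign}(\sigma)\,a_1\otimes\cdots\otimes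 a_k\otimes\phi$ for all $\sigma\in S_k$. *)

theory Defs
  imports Main "HOL-Combinatorics.Permutations" "HOL-Computational_Algebra.Polynomial"
begin

text \<open>A Lie conformal algebra over the field 'f: an 'f-vector space A (scalar
multiplication sc) with a linear map D (= partial) and n-th products
pr a b n = a_(n) b, i.e. [a_lambda b] = sum_n lambda^n/n! a_(n) b.
The axioms are the coefficientwise form of sesquilinearity, skew-symmetry and
the Jacobi identity of the lambda-bracket.\<close>

definition is_lca ::
  "('f::field_char_0 \<Rightarrow> 'a::ab_group_add \<Rightarrow> 'a) \<Rightarrow> ('a \<Rightarrow> 'a) \<Rightarrow> ('a \<Rightarrow> 'a \<Rightarrow> nat \<Rightarrow> 'a) \<Rightarrow> bool"
where
  "is_lca sc D pr \<longleftrightarrow>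
     vector_space sc \<and> Vector_Spaces.linear sc sc D
   \<and> (\<forall>b n. Vector_Spaces.linear sc sc (\<lambda>a. pr a b n))
   \<and> (\<forall>a n. Vector_Spaces.linear sc sc (\<lambda>b. pr a b n))
   \<and> (\<forall>a b. \<exists>N. \<forall>n\<ge>N. pr a b n = 0)
   \<and> (\<forall>a b n. pr (D a) b n = - sc (of_nat n) (pr a b (n - 1)))
   \<and> (\<forall>a b n. pr a (D b) n = D (pr a b n) + sc (of_nat n) (pr a b (n - 1)))
   \<and> (\<forall>a b n N. (\<forall>j\<ge>N. pr b a j = 0) \<longrightarrow>
        pr a b n = - (\<Sum>j<N. sc ((-1)^(n+j) / fact j) ((D ^^ j) (pr b a (n+j)))))
   \<and> (\<forall>a b c m n. pr a (pr b c n) m - pr b (pr a c m) n =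
        (\<Sum>j\<le>m. sc (of_nat (m choose j)) (pr (pr a b j) c (m + n - j))))"

definition is_lca_module ::
  "('f::field_char_0 \<Rightarrow> 'a::ab_group_add \<Rightarrow> 'a) \<Rightarrow> ('a \<Rightarrow> 'a) \<Rightarrow> ('a \<Rightarrow> 'a \<Rightarrow> nat \<Rightarrow> 'a) \<Rightarrow>
   ('f \<Rightarrow> 'm::ab_group_add \<Rightarrow> 'm) \<Rightarrow> ('m \<Rightarrow> 'm) \<Rightarrow> ('a \<Rightarrow> 'm \<Rightarrow> nat \<Rightarrow> 'm) \<Rightarrow> bool"
where
  "is_lca_module sc D pr scM DM act \<longleftrightarrow>
     is_lca sc D pr \<and> vector_space scM \<and> Vector_Spaces.linear scM scM DM
   \<and> (\<forall>v n. Vector_Spaces.linear sc scM (\<lambda>a. act a v n))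
   \<and> (\<forall>a n. Vector_Spaces.linear scM scM (\<lambda>v. act a v n))
   \<and> (\<forall>a v. \<exists>N. \<forall>n\<ge>N. act a v n = 0)
   \<and> (\<forall>a v n. act (D a) v n = - scM (of_nat n) (act a v (n - 1)))
   \<and> (\<forall>a v n. act a (DM v) n = DM (act a v n) + scM (of_nat n) (act a v (n - 1)))
   \<and> (\<forall>a b v m n. act a (act b v n) m - act b (act a v m) n =
        (\<Sum>j\<le>m. scM (of_nat (m choose j)) (act (pr a b j) v (m + n - j))))"

definition op_eval :: "('f::field \<Rightarrow> 'a::ab_group_add \<Rightarrow> 'a) \<Rightarrow> ('a \<Rightarrow> 'a) \<Rightarrow> 'f poly \<Rightarrow> 'a \<Rightarrow> 'a" where
  "op_eval sc D p a = (\<Sum>i\<le>degree p. sc (coeff p i) ((D ^^ i) a))"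

definition is_torsion :: "('f::field \<Rightarrow> 'a::ab_group_add \<Rightarrow> 'a) \<Rightarrow> ('a \<Rightarrow> 'a) \<Rightarrow> 'a \<Rightarrow> bool" where
  "is_torsion sc D a \<longleftrightarrow> (\<exists>p. p \<noteq> 0 \<and> op_eval sc D p a = 0)"

text \<open>Quotient Abar = A / Tor A: elements are cosets a + Tor A, operations via
representatives.\<close>

definition tor_cls :: "('f::field \<Rightarrow> 'a::ab_group_add \<Rightarrow> 'a) \<Rightarrow> ('a \<Rightarrow> 'a) \<Rightarrow> 'a \<Rightarrow> 'a set" where
  "tor_cls sc D a = {b. is_torsion sc D (b - a)}"

definition bar_add where "bar_add sc D X Y = (\<Union>x\<in>X. \<Union>y\<in>Y. tor_cls sc D (x + y))"
definition bar_scale where "bar_scale sc D c X = (\<Union>x\<in>X. tor_cls sc D (sc c x))"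
definition bar_D where "bar_D sc D X = (\<Union>x\<in>X. tor_cls sc D (D x))"

text \<open>Hom(F[lambda_1..lambda_k], M) is encoded by the values on the monomial basis:
phi e = image of lambda_1^(e 0) * ... * lambda_k^(e (k-1)); exponent vectors are
e :: nat => nat with e j = 0 for j >= k, and phi is 0 on other e.
Generators of A^{tensor k} tensor Hom: pairs (as, phi) with length as = k.\<close>

definition hom_ok :: "nat \<Rightarrow> ((nat \<Rightarrow> nat) \<Rightarrow> 'm::zero) \<Rightarrow> bool" where
  "hom_ok k \<phi> \<longleftrightarrow> (\<forall>e. (\<exists>j\<ge>k. e j \<noteq> 0) \<longrightarrow> \<phi> e = 0)"

definition gen_dom :: "nat \<Rightarrow> 'b set \<Rightarrow> ('b list \<times> ((nat \<Rightarrow> nat) \<Rightarrow> 'm::zero)) set" where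
  "gen_dom k CA = {(as, \<phi>). length as = k \<and> set as \<subseteq> CA \<and> hom_ok k \<phi>}"

text \<open>lambda_i^* phi (0-based index i) and sigma^* phi on the monomial basis.\<close>
definition lam_pull :: "nat \<Rightarrow> ((nat \<Rightarrow> nat) \<Rightarrow> 'm) \<Rightarrow> ((nat \<Rightarrow> nat) \<Rightarrow> 'm)" where
  "lam_pull i \<phi> = (\<lambda>e. \<phi> (e(i := Suc (e i))))"

definition perm_pull :: "(nat \<Rightarrow> nat) \<Rightarrow> ((nat \<Rightarrow> nat) \<Rightarrow> 'm) \<Rightarrow> ((nat \<Rightarrow> nat) \<Rightarrow> 'm)" where
  "perm_pull \<sigma> \<phi> = (\<lambda>e. \<phi> (e \<circ> inv \<sigma>))"

definition perm_list :: "nat \<Rightarrow> (nat \<Rightarrow> nat) \<Rightarrow> 'b list \<Rightarrow> 'b list" where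
  "perm_list k \<sigma> as = map (\<lambda>i. as ! \<sigma> i) [0..<k]"

text \<open>Free F-vector space on the generators: finitely supported functions; basis vector:\<close>
definition gvec :: "'g \<Rightarrow> 'g \<Rightarrow> 'f::field" where
  "gvec g = (\<lambda>h. if h = g then 1 else 0)"

text \<open>Relations: multilinearity (tensor product over F) and (C1), (C2).
Parameters: number k, carrier CA of A, addition, scalar mult., partial of A,
scalar multiplication of M.\<close>
inductive_set chain_rels ::
  "nat \<Rightarrow> 'b set \<Rightarrow> ('b \<Rightarrow> 'b \<Rightarrow> 'b) \<Rightarrow> ('f::field \<Rightarrow> 'b \<Rightarrow> 'b) \<Rightarrow> ('b \<Rightarrow> 'b) \<Rightarrow>
   ('f \<Rightarrow> 'm::ab_group_add \<Rightarrow> 'm) \<Rightarrow> (('b list \<times> ((nat \<Rightarrow> nat) \<Rightarrow> 'm)) \<Rightarrow> 'f) set"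
  for k CA addA scA DA scM
where
  add_left: "\<lbrakk>(as, \<phi>) \<in> gen_dom k CA; i < k; x \<in> CA; y \<in> CA\<rbrakk> \<Longrightarrow>
     (\<lambda>h. gvec (as[i := addA x y], \<phi>) h - gvec (as[i := x], \<phi>) h - gvec (as[i := y], \<phi>) h)
       \<in> chain_rels k CA addA scA DA scM"
| scale_left: "\<lbrakk>(as, \<phi>) \<in> gen_dom k CA; i < k; x \<in> CA\<rbrakk> \<Longrightarrow>
     (\<lambda>h. gvec (as[i := scA c x], \<phi>) h - c * gvec (as[i := x], \<phi>) h)
       \<in> chain_rels k CA addA scA DA scM"
| add_right: "\<lbrakk>(as, \<phi>) \<in> gen_dom k CA; (as, \<psi>) \<in> gen_dom k CA\<rbrakk> \<Longrightarrow>
     (\<lambda>h. gvec (as, \<lambda>e. \<phi> e + \<psi> e) h - gvec (as, \<phi>) h - gvec (as, \<psi>) h)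
       \<in> chain_rels k CA addA scA DA scM"
| scale_right: "(as, \<phi>) \<in> gen_dom k CA \<Longrightarrow>
     (\<lambda>h. gvec (as, \<lambda>e. scM c (\<phi> e)) h - c * gvec (as, \<phi>) h)
       \<in> chain_rels k CA addA scA DA scM"
| C1: "\<lbrakk>(as, \<phi>) \<in> gen_dom k CA; i < k\<rbrakk> \<Longrightarrow>
     (\<lambda>h. gvec (as[i := DA (as ! i)], \<phi>) h + gvec (as, lam_pull i \<phi>) h)
       \<in> chain_rels k CA addA scA DA scM"
| C2: "\<lbrakk>(as, \<phi>) \<in> gen_dom k CA; \<sigma> permutes {..<k}\<rbrakk> \<Longrightarrow>
     (\<lambda>h. gvec (perm_list k \<sigma> as, perm_pull \<sigma> \<phi>) h - of_int (sign \<sigma>) * gvec (as, \<phi>) h)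
       \<in> chain_rels k CA addA scA DA scM"

text \<open>Linear span of the relations; x is zero in the quotient iff x is in the span.\<close>
inductive_set chain_span ::
  "nat \<Rightarrow> 'b set \<Rightarrow> ('b \<Rightarrow> 'b \<Rightarrow> 'b) \<Rightarrow> ('f::field \<Rightarrow> 'b \<Rightarrow> 'b) \<Rightarrow> ('b \<Rightarrow> 'b) \<Rightarrow>
   ('f \<Rightarrow> 'm::ab_group_add \<Rightarrow> 'm) \<Rightarrow> (('b list \<times> ((nat \<Rightarrow> nat) \<Rightarrow> 'm)) \<Rightarrow> 'f) set"
  for k CA addA scA DA scM
where
  zero: "(\<lambda>h. 0) \<in> chain_span k CA addA scA DA scM"
| step: "\<lbrakk>x \<in> chain_span k CA addA scA DA scM; r \<in> chain_rels k CA addA scA DA scM\<rbrakk> \<Longrightarrow>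
     (\<lambda>h. x h + c * r h) \<in> chain_span k CA addA scA DA scM"

definition free_elt :: "nat \<Rightarrow> 'b set \<Rightarrow> (('b list \<times> ((nat \<Rightarrow> nat) \<Rightarrow> 'm::zero)) \<Rightarrow> 'f::zero) \<Rightarrow> bool" where
  "free_elt k CA x \<longleftrightarrow> finite {g. x g \<noteq> 0} \<and> {g. x g \<noteq> 0} \<subseteq> gen_dom k CA"

text \<open>Linear map induced on generators by a_i |-> a_i + Tor A.\<close>
definition bar_proj :: "('f::field \<Rightarrow> 'a::ab_group_add \<Rightarrow> 'a) \<Rightarrow> ('a \<Rightarrow> 'a) \<Rightarrow>
   (('a list \<times> ((nat \<Rightarrow> nat) \<Rightarrow> 'm)) \<Rightarrow> 'f) \<Rightarrow> (('a set list \<times> ((nat \<Rightarrow> nat) \<Rightarrow> 'm)) \<Rightarrow> 'f)" where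
  "bar_proj sc D x = (\<lambda>(bs, \<phi>). \<Sum>g\<in>{g. x g \<noteq> 0 \<and> map (tor_cls sc D) (fst g) = bs \<and> snd g = \<phi>}. x g)"

end

theory Submission
  imports Defs
begin

text \<open>If \<open>p(\<partial>) a\<^sub>i = 0\<close> for a nonzero polynomial \<open>p\<close>, write \<open>\<phi> = p(-\<lambda>\<^sub>i)\<^sup>* \<psi>\<close>, which
  is possible because multiplication by \<open>p(-\<lambda>\<^sub>i)\<close> is injective on polynomials.  Then (C1) and
  multilinearity give \<open>a\<^sub>1 \<otimes> \<dots> \<otimes> a\<^sub>k \<otimes> \<phi> = a\<^sub>1 \<otimes> \<dots> \<otimes> p(\<partial>) a\<^sub>i \<otimes> \<dots> \<otimes> a\<^sub>k \<otimes> \<psi> = 0\<close>.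
  Hence two basic chains whose entries agree modulo torsion are equal in \<open>\<Gamma>\<^sub>k\<close>, so the kernel of
  the projection onto chains over \<open>A/Tor A\<close> consists of relations; since the relations over
  \<open>A/Tor A\<close> are exactly the images of those over \<open>A\<close>, the two presentations of \<open>\<Gamma>\<^sub>k\<close> agree.\<close>

section \<open>Polynomials in \<open>\<partial>\<close> and torsion\<close>

locale linear_endo = vector_space sc
  for sc :: "'f::field \<Rightarrow> 'a::ab_group_add \<Rightarrow> 'a" +
  fixes D :: "'a \<Rightarrow> 'a"
  assumes linear_D: "Vector_Spaces.linear sc sc D"
begin

sublocale D: Vector_Spaces.linear sc sc D
  by (rule linear_D)

lemma linear_funpow: "Vector_Spaces.linear sc sc (D ^^ n)"
proof (induction n)
  case 0
  then show ?case by (simp add: linear_ident)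
next
  case (Suc n)
  show ?case
    using Vector_Spaces.linear_compose[OF Suc.IH linear_D] by (simp add: comp_def)
qed

lemma linear_op_eval: "Vector_Spaces.linear sc sc (op_eval sc D p)"
proof -
  interpret vector_space_pair sc sc ..
  show ?thesis
    unfolding op_eval_def
    by (intro linear_compose_sum ballI linear_compose_scale_right linear_funpow)
qed

sublocale op_eval: Vector_Spaces.linear sc sc "op_eval sc D p"
  by (rule linear_op_eval)

lemma op_eval_D: "op_eval sc D p (D a) = D (op_eval sc D p a)"
  by (simp add: op_eval_def D.sum D.scale funpow_swap1)

lemma op_eval_eq_sum:
  assumes "degree p \<le> N"
  shows "op_eval sc D p a = (\<Sum>i\<le>N. sc (coeff p i) ((D ^^ i) a))"
  unfolding op_eval_def
  by (rule sum.mono_neutral_left) (use assms in \<open>auto simp: coeff_eq_0\<close>)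

lemma op_eval_add_poly: "op_eval sc D (p + q) a = op_eval sc D p a + op_eval sc D q a"
proof -
  let ?N = "max (degree p) (degree q)"
  have "degree (p + q) \<le> ?N"
    by (rule degree_add_le) auto
  then show ?thesis
    by (simp add: op_eval_eq_sum[of _ ?N] sum.distrib scale_left_distrib)
qed

lemma op_eval_smult: "op_eval sc D (smult c p) a = sc c (op_eval sc D p a)"
  by (simp add: op_eval_eq_sum[OF degree_smult_le] scale_sum_right op_eval_def)

lemma op_eval_pCons: "op_eval sc D (pCons c p) a = sc c a + op_eval sc D p (D a)"
proof -
  have "op_eval sc D (pCons c p) a = (\<Sum>i\<le>Suc (degree p). sc (coeff (pCons c p) i) ((D ^^ i) a))"
    by (rule op_eval_eq_sum) (simp add: degree_pCons_le)
  also have "\<dots> = sc c a + (\<Sum>i\<le>degree p. sc (coeff p i) ((D ^^ i) (D a)))"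
    by (simp only: sum.atMost_Suc_shift) (simp add: funpow_Suc_right del: funpow.simps)
  finally show ?thesis
    by (simp add: op_eval_def)
qed

lemma op_eval_mult: "op_eval sc D (p * q) a = op_eval sc D p (op_eval sc D q a)"
proof (induction p arbitrary: a rule: pCons_induct)
  case 0
  then show ?case by (simp add: op_eval_def)
next
  case (pCons c p)
  then show ?case
    by (simp add: op_eval_add_poly op_eval_smult op_eval_pCons op_eval_D)
qed

lemma torsion_0: "is_torsion sc D 0"
  unfolding is_torsion_def by (intro exI[of _ 1]) simp

lemma torsion_add:
  assumes "is_torsion sc D x" "is_torsion sc D y"
  shows "is_torsion sc D (x + y)"
proof -
  obtain p q where p: "p \<noteq> 0" "op_eval sc D p x = 0" and q: "q \<noteq> 0" "op_eval sc D q y = 0"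
    using assms unfolding is_torsion_def by blast
  have "op_eval sc D (p * q) (x + y) = op_eval sc D (q * p) x + op_eval sc D (p * q) y"
    by (simp add: op_eval.add mult.commute)
  also have "\<dots> = 0"
    using p q by (simp add: op_eval_mult)
  finally have "op_eval sc D (p * q) (x + y) = 0" .
  then show ?thesis
    unfolding is_torsion_def using p q by (intro exI[of _ "p * q"]) simp
qed

lemma torsion_scale: "is_torsion sc D x \<Longrightarrow> is_torsion sc D (sc c x)"
  unfolding is_torsion_def by (auto simp: op_eval.scale)

lemma torsion_uminus: "is_torsion sc D x \<Longrightarrow> is_torsion sc D (- x)"
  unfolding is_torsion_def by (auto simp: op_eval.neg)

lemma torsion_diff: "is_torsion sc D x \<Longrightarrow> is_torsion sc D y \<Longrightarrow> is_torsion sc D (x - y)"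
  using torsion_add[of x "- y"] torsion_uminus[of y] by simp

lemma torsion_D: "is_torsion sc D x \<Longrightarrow> is_torsion sc D (D x)"
  unfolding is_torsion_def by (auto simp: op_eval_D)

lemma tor_cls_eq_iff: "tor_cls sc D a = tor_cls sc D b \<longleftrightarrow> is_torsion sc D (a - b)"
proof
  assume "tor_cls sc D a = tor_cls sc D b"
  moreover have "a \<in> tor_cls sc D a"
    by (simp add: tor_cls_def torsion_0)
  ultimately show "is_torsion sc D (a - b)"
    by (simp add: tor_cls_def)
next
  assume ab: "is_torsion sc D (a - b)"
  have "is_torsion sc D (x - a) \<longleftrightarrow> is_torsion sc D (x - b)" for x
    using torsion_add[OF _ ab, of "x - a"] torsion_diff[OF _ ab, of "x - b"] by auto
  then show "tor_cls sc D a = tor_cls sc D b"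
    by (auto simp: tor_cls_def)
qed

lemma UN_tor_cls:
  assumes "\<And>x'. is_torsion sc D (x' - x) \<Longrightarrow> is_torsion sc D (f x' - f x)"
  shows "(\<Union>x'\<in>tor_cls sc D x. tor_cls sc D (f x')) = tor_cls sc D (f x)"
proof -
  have "tor_cls sc D (f x') = tor_cls sc D (f x)" if "x' \<in> tor_cls sc D x" for x'
    using that assms unfolding tor_cls_eq_iff by (simp add: tor_cls_def)
  moreover have "x \<in> tor_cls sc D x"
    by (simp add: tor_cls_def torsion_0)
  ultimately show ?thesis
    by blast
qed

lemma bar_add_tor_cls: "bar_add sc D (tor_cls sc D x) (tor_cls sc D y) = tor_cls sc D (x + y)"
proof -
  have "(\<Union>y'\<in>tor_cls sc D y. tor_cls sc D (x' + y')) = tor_cls sc D (x' + y)" for x'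
    by (rule UN_tor_cls) simp
  moreover have "(\<Union>x'\<in>tor_cls sc D x. tor_cls sc D (x' + y)) = tor_cls sc D (x + y)"
    by (rule UN_tor_cls) simp
  ultimately show ?thesis
    by (simp add: bar_add_def)
qed

lemma bar_scale_tor_cls: "bar_scale sc D c (tor_cls sc D x) = tor_cls sc D (sc c x)"
  unfolding bar_scale_def
  by (rule UN_tor_cls) (metis scale_right_diff_distrib torsion_scale)

lemma bar_D_tor_cls: "bar_D sc D (tor_cls sc D x) = tor_cls sc D (D x)"
  unfolding bar_D_def
  by (rule UN_tor_cls) (metis D.diff torsion_D)

end

section \<open>Inverting \<open>p(\<lambda>\<^sub>i)\<^sup>*\<close>\<close>

function lin_rec_solve ::
  "('f::field \<Rightarrow> 'm::ab_group_add \<Rightarrow> 'm) \<Rightarrow> (nat \<Rightarrow> 'f) \<Rightarrow> nat \<Rightarrow> (nat \<Rightarrow> 'm) \<Rightarrow> nat \<Rightarrow> 'm"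
where
  "lin_rec_solve scM b d f n =
     (if n < d then 0
      else scM (inverse (b d))
             (f (n - d) - (\<Sum>j<d. scM (b j) (lin_rec_solve scM b d f (n - d + j)))))"
  by pat_completeness auto
termination
  by (relation "measure (\<lambda>(_, _, _, _, n). n)") auto

declare lin_rec_solve.simps [simp del]

lemma lin_rec_solve_eq:
  assumes "vector_space scM" "b d \<noteq> 0"
  shows "(\<Sum>j\<le>d. scM (b j) (lin_rec_solve scM b d f (n + j))) = f n"
proof -
  interpret vector_space scM by fact
  have "lin_rec_solve scM b d f (n + d)
      = scM (inverse (b d)) (f n - (\<Sum>j<d. scM (b j) (lin_rec_solve scM b d f (n + j))))"
    by (subst lin_rec_solve.simps) (simp add: add.commute)
  with assms(2) show ?thesis
    by (simp add: lessThan_Suc_atMost[symmetric])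
qed

lemma lin_rec_solve_0:
  assumes "vector_space scM"
  shows "lin_rec_solve scM b d (\<lambda>_. 0) n = 0"
proof (induction n rule: less_induct)
  case (less n)
  interpret vector_space scM by fact
  show ?case
    using less by (subst lin_rec_solve.simps) simp
qed

lemma funpow_lam_pull: "(lam_pull i ^^ j) \<psi> e = \<psi> (e(i := e i + j))"
  by (induction j arbitrary: e) (simp_all add: lam_pull_def)

lemma hom_ok_lam_pull: "hom_ok k \<phi> \<Longrightarrow> i < k \<Longrightarrow> hom_ok k (lam_pull i \<phi>)"
  unfolding hom_ok_def lam_pull_def by (metis fun_upd_other not_le)

lemma hom_ok_funpow_lam_pull: "hom_ok k \<phi> \<Longrightarrow> i < k \<Longrightarrow> hom_ok k ((lam_pull i ^^ j) \<phi>)"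
  by (induction j) (simp_all add: hom_ok_lam_pull)

lemma lam_pull_poly_surj:
  assumes "vector_space scM" "b d \<noteq> 0" "hom_ok k \<phi>" "i < k"
  shows "\<exists>\<psi>. hom_ok k \<psi> \<and> (\<lambda>e. \<Sum>j\<le>d. scM (b j) ((lam_pull i ^^ j) \<psi> e)) = \<phi>"
proof (intro exI conjI)
  define \<psi> where "\<psi> e = lin_rec_solve scM b d (\<lambda>n. \<phi> (e(i := n))) (e i)" for e
  show "hom_ok k \<psi>"
    unfolding hom_ok_def
  proof (intro allI impI)
    fix e :: "nat \<Rightarrow> nat"
    assume "\<exists>j\<ge>k. e j \<noteq> 0"
    then have "(\<lambda>n. \<phi> (e(i := n))) = (\<lambda>_. 0)"
      using assms(3,4) unfolding hom_ok_def by (metis fun_upd_other not_le)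
    then show "\<psi> e = 0"
      by (simp add: \<psi>_def lin_rec_solve_0[OF assms(1)])
  qed
  show "(\<lambda>e. \<Sum>j\<le>d. scM (b j) ((lam_pull i ^^ j) \<psi> e)) = \<phi>"
    using lin_rec_solve_eq[of scM b d, OF assms(1,2)] by (simp add: funpow_lam_pull \<psi>_def)
qed

abbreviation supp :: "('g \<Rightarrow> 'f::zero) \<Rightarrow> 'g set" where
  "supp x \<equiv> {g. x g \<noteq> 0}"

lemma finite_supp_gvec: "finite (supp (gvec g))"
  by (simp add: gvec_def)

lemma finite_supp_diff:
  fixes x y :: "'g \<Rightarrow> 'f::group_add"
  shows "finite (supp x) \<Longrightarrow> finite (supp y) \<Longrightarrow> finite (supp (\<lambda>h. x h - y h))"
  by (rule finite_subset[of _ "supp x \<union> supp y"]) auto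

lemma finite_supp_mult:
  fixes x :: "'g \<Rightarrow> 'f::mult_zero"
  shows "finite (supp x) \<Longrightarrow> finite (supp (\<lambda>h. c * x h))"
  by (rule finite_subset[of _ "supp x"]) auto

definition pushforward :: "('g \<Rightarrow> 'h) \<Rightarrow> ('g \<Rightarrow> 'f::comm_monoid_add) \<Rightarrow> 'h \<Rightarrow> 'f" where
  "pushforward f x y = (\<Sum>g | x g \<noteq> 0 \<and> f g = y. x g)"

lemma bar_proj_eq_pushforward: "bar_proj sc D = pushforward (map_prod (map (tor_cls sc D)) id)"
  by (intro ext) (auto simp: bar_proj_def pushforward_def intro!: sum.cong)

lemma pushforward_eq_sum:
  assumes "finite F" "supp x \<subseteq> F"
  shows "pushforward f x y = (\<Sum>g | g \<in> F \<and> f g = y. x g)"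
  unfolding pushforward_def
  by (rule sum.mono_neutral_left) (use assms in auto)

lemma pushforward_0 [simp]: "pushforward f (\<lambda>_. 0) = (\<lambda>_. 0)"
  by (simp add: pushforward_def fun_eq_iff)

lemma pushforward_gvec: "pushforward f (gvec g) = gvec (f g)"
  by (auto simp: pushforward_def gvec_def fun_eq_iff)

lemma pushforward_add:
  fixes x y :: "'g \<Rightarrow> 'f::comm_monoid_add"
  assumes "finite (supp x)" "finite (supp y)"
  shows "pushforward f (\<lambda>h. x h + y h) = (\<lambda>b. pushforward f x b + pushforward f y b)"
proof
  fix b
  let ?F = "supp x \<union> supp y"
  have "finite ?F"
    using assms by simp
  then show "pushforward f (\<lambda>h. x h + y h) b = pushforward f x b + pushforward f y b"
    by (subst (1 2 3) pushforward_eq_sum[where F = ?F]) (auto simp: sum.distrib)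
qed

lemma pushforward_diff:
  fixes x y :: "'g \<Rightarrow> 'f::ab_group_add"
  assumes "finite (supp x)" "finite (supp y)"
  shows "pushforward f (\<lambda>h. x h - y h) = (\<lambda>b. pushforward f x b - pushforward f y b)"
proof
  fix b
  let ?F = "supp x \<union> supp y"
  have "finite ?F"
    using assms by simp
  then show "pushforward f (\<lambda>h. x h - y h) b = pushforward f x b - pushforward f y b"
    by (subst (1 2 3) pushforward_eq_sum[where F = ?F]) (auto simp: sum_subtractf)
qed

lemma pushforward_mult:
  fixes x :: "'g \<Rightarrow> 'f::semiring_no_zero_divisors"
  shows "pushforward f (\<lambda>h. c * x h) = (\<lambda>b. c * pushforward f x b)"
  by (cases "c = 0") (simp_all add: pushforward_def fun_eq_iff sum_distrib_left)

lemma pushforward_gvec_diff: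
  "pushforward f (\<lambda>h. gvec g1 h - gvec g2 h) = (\<lambda>b. gvec (f g1) b - gvec (f g2) b)"
  by (simp add: pushforward_diff[OF finite_supp_gvec finite_supp_gvec] pushforward_gvec)

lemma pushforward_gvec_diff_diff:
  "pushforward f (\<lambda>h. gvec g1 h - gvec g2 h - gvec g3 h)
     = (\<lambda>b. gvec (f g1) b - gvec (f g2) b - gvec (f g3) b)"
  by (simp add: pushforward_diff[OF finite_supp_diff[OF finite_supp_gvec finite_supp_gvec] finite_supp_gvec]
      pushforward_gvec_diff pushforward_gvec)

lemma pushforward_gvec_diff_mult:
  "pushforward f (\<lambda>h. gvec g1 h - c * gvec g2 h) = (\<lambda>b. gvec (f g1) b - c * gvec (f g2) b)"
  by (simp add: pushforward_diff[OF finite_supp_gvec finite_supp_mult[OF finite_supp_gvec]]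
      pushforward_mult pushforward_gvec)

lemma pushforward_gvec_add:
  "pushforward f (\<lambda>h. gvec g1 h + gvec g2 h) = (\<lambda>b. gvec (f g1) b + gvec (f g2) b)"
  by (simp add: pushforward_add[OF finite_supp_gvec finite_supp_gvec] pushforward_gvec)

lemma pushforward_lincomb:
  fixes x y :: "'g \<Rightarrow> 'f::field"
  assumes "finite (supp x)" "finite (supp y)"
  shows "pushforward f (\<lambda>h. x h + c * y h) = (\<lambda>b. pushforward f x b + c * pushforward f y b)"
  by (simp add: pushforward_add[OF assms(1) finite_supp_mult[OF assms(2)]] pushforward_mult)

lemma pushforward_eq_0_induct [consumes 3, case_names zero step]:
  fixes w :: "'g \<Rightarrow> 'f::field"
  assumes "finite (supp w)" "supp w \<subseteq> G" "pushforward f w = (\<lambda>_. 0)"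
    and zero: "P (\<lambda>_. 0)"
    and step: "\<And>x g g' c. P x \<Longrightarrow> g \<in> G \<Longrightarrow> g' \<in> G \<Longrightarrow> f g = f g' \<Longrightarrow>
                  P (\<lambda>h. x h + c * (gvec g h - gvec g' h))"
  shows "P w"
  using assms(1-3)
proof (induction "card (supp w)" arbitrary: w rule: less_induct)
  case less
  show ?case
  proof (cases "supp w = {}")
    case True
    then have "w = (\<lambda>_. 0)"
      by auto
    with zero show ?thesis
      by simp
  next
    case False
    then obtain g where g: "w g \<noteq> 0"
      by auto
    have "(\<Sum>g' | w g' \<noteq> 0 \<and> f g' = f g. w g') = 0"
      using fun_cong[OF less.prems(3), of "f g"] by (simp add: pushforward_def)
    then have "{g'. w g' \<noteq> 0 \<and> f g' = f g} \<noteq> {g}"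
      using g by auto
    then obtain g' where g': "w g' \<noteq> 0" "f g' = f g" "g' \<noteq> g"
      using g by blast
    define w' where "w' = (\<lambda>h. w h + (- w g) * (gvec g h - gvec g' h))"
    have supp_w': "supp w' \<subseteq> supp w - {g}"
      using g' by (auto simp: w'_def gvec_def split: if_splits)
    have "card (supp w') < card (supp w)"
      using supp_w' g less.prems(1) by (intro psubset_card_mono) auto
    moreover have "finite (supp w')" "supp w' \<subseteq> G"
      using supp_w' less.prems(1,2) by (auto intro: finite_subset)
    moreover have "pushforward f w' = (\<lambda>_. 0)"
      unfolding w'_def pushforward_lincomb[OF less.prems(1) finite_supp_diff[OF finite_supp_gvec finite_supp_gvec]]
      using less.prems(3) g'(2) by (simp add: pushforward_gvec_diff)
    ultimately have "P w'"
      by (rule less.hyps)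
    then have "P (\<lambda>h. w' h + w g * (gvec g h - gvec g' h))"
      using g g' less.prems(2) by (intro step) auto
    then show ?thesis
      by (simp add: w'_def)
  qed
qed

lemma pushforward_right_inverse:
  assumes "finite (supp y)" "\<And>b. b \<in> supp y \<Longrightarrow> f (s b) = b"
  shows "pushforward f (\<lambda>g. if g \<in> s ` supp y then y (f g) else 0) = y"
proof
  fix b
  have fiber: "{g. g \<in> s ` supp y \<and> f g = b} = (if b \<in> supp y then {s b} else {})"
    using assms(2) by auto
  show "pushforward f (\<lambda>g. if g \<in> s ` supp y then y (f g) else 0) b = y b"
    using assms by (subst pushforward_eq_sum[where F = "s ` supp y"]) (auto simp: fiber)
qed

section \<open>Chains modulo the relations\<close>

lemma chain_span_lincomb:
  assumes "x \<in> chain_span k CA addA scA DA scM" "y \<in> chain_span k CA addA scA DA scM"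
  shows "(\<lambda>h. x h + c * y h) \<in> chain_span k CA addA scA DA scM"
  using assms(2)
proof (induction arbitrary: c)
  case zero
  then show ?case
    using assms(1) by simp
next
  case (step y r d)
  have "(\<lambda>h. (x h + c * y h) + (c * d) * r h) \<in> chain_span k CA addA scA DA scM"
    by (rule chain_span.step[OF step.IH step.hyps(2)])
  then show ?case
    by (simp add: algebra_simps)
qed

lemma chain_span_rel:
  "r \<in> chain_rels k CA addA scA DA scM \<Longrightarrow> r \<in> chain_span k CA addA scA DA scM"
  using chain_span.step[OF chain_span.zero, of r k CA addA scA DA scM 1] by simp

locale chain_space = linear_endo sc D + M: vector_space scM
  for sc :: "'f::field \<Rightarrow> 'a::ab_group_add \<Rightarrow> 'a" and D :: "'a \<Rightarrow> 'a"
    and scM :: "'f \<Rightarrow> 'm::ab_group_add \<Rightarrow> 'm" +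
  fixes k :: nat
begin

abbreviation null_chains where
  "null_chains \<equiv> chain_span k UNIV (+) sc D scM"

text \<open>\<open>x \<approx> y\<close> means that \<open>x\<close> and \<open>y\<close> have the same image in \<open>\<Gamma>\<^sub>k(A, M)\<close>.\<close>

definition chain_equiv (infix "\<approx>" 50) where
  "x \<approx> y \<longleftrightarrow> (\<lambda>h. x h - y h) \<in> null_chains"

lemma chain_equiv_refl [simp]: "x \<approx> x"
  using chain_span.zero by (simp add: chain_equiv_def)

lemma null_chains_iff: "x \<in> null_chains \<longleftrightarrow> x \<approx> (\<lambda>_. 0)"
  by (simp add: chain_equiv_def)

lemma chain_equiv_scale:
  assumes "x \<approx> y"
  shows "(\<lambda>h. c * x h) \<approx> (\<lambda>h. c * y h)"
proof -
  have "(\<lambda>h. 0 + c * (x h - y h)) \<in> null_chains"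
    using chain_span_lincomb[OF chain_span.zero assms[unfolded chain_equiv_def]] .
  then show ?thesis
    by (simp add: chain_equiv_def right_diff_distrib)
qed

lemma chain_equiv_sym: "x \<approx> y \<Longrightarrow> y \<approx> x"
  using chain_equiv_scale[of x y "-1"] by (simp add: chain_equiv_def)

lemma chain_equiv_add: "x \<approx> x' \<Longrightarrow> y \<approx> y' \<Longrightarrow> (\<lambda>h. x h + y h) \<approx> (\<lambda>h. x' h + y' h)"
  unfolding chain_equiv_def
  by (drule (1) chain_span_lincomb[of _ _ _ _ _ _ _ _ 1]) (simp add: algebra_simps)

lemma chain_equiv_trans [trans]: "x \<approx> y \<Longrightarrow> y \<approx> z \<Longrightarrow> x \<approx> z"
  unfolding chain_equiv_def
  by (drule (1) chain_span_lincomb[of _ _ _ _ _ _ _ _ 1]) simp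

lemma chain_equiv_sum:
  assumes "finite J" "\<And>j. j \<in> J \<Longrightarrow> x j \<approx> y j"
  shows "(\<lambda>h. \<Sum>j\<in>J. c j * x j h) \<approx> (\<lambda>h. \<Sum>j\<in>J. c j * y j h)"
  using assms
proof (induction J rule: finite_induct)
  case empty
  then show ?case
    by simp
next
  case (insert j J)
  then show ?case
    using chain_equiv_add[OF chain_equiv_scale[of "x j" "y j" "c j"]] by simp
qed

end

context chain_space
begin

lemma hom_ok_scale: "hom_ok k \<phi> \<Longrightarrow> hom_ok k (\<lambda>e. scM c (\<phi> e))"
  by (simp add: hom_ok_def)

lemma gvec_add_entry:
  assumes "length as = k" "hom_ok k \<phi>" "i < k"
  shows "gvec (as[i := x + y], \<phi>) \<approx> (\<lambda>h. gvec (as[i := x], \<phi>) h + gvec (as[i := y], \<phi>) h)"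
  using chain_span_rel[OF chain_rels.add_left[of as \<phi> k UNIV i x y "(+)" sc D scM]] assms
  by (simp add: gen_dom_def chain_equiv_def diff_diff_eq)

lemma gvec_scale_entry:
  assumes "length as = k" "hom_ok k \<phi>" "i < k"
  shows "gvec (as[i := sc c x], \<phi>) \<approx> (\<lambda>h. c * gvec (as[i := x], \<phi>) h)"
  using chain_span_rel[OF chain_rels.scale_left[of as \<phi> k UNIV i x sc c "(+)" D scM]] assms
  by (simp add: gen_dom_def chain_equiv_def)

lemma gvec_add_hom:
  assumes "length as = k" "hom_ok k \<phi>" "hom_ok k \<psi>"
  shows "gvec (as, \<lambda>e. \<phi> e + \<psi> e) \<approx> (\<lambda>h. gvec (as, \<phi>) h + gvec (as, \<psi>) h)"
  using chain_span_rel[OF chain_rels.add_right[of as \<phi> k UNIV \<psi> "(+)" sc D scM]] assms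
  by (simp add: gen_dom_def chain_equiv_def diff_diff_eq)

lemma gvec_scale_hom:
  assumes "length as = k" "hom_ok k \<phi>"
  shows "gvec (as, \<lambda>e. scM c (\<phi> e)) \<approx> (\<lambda>h. c * gvec (as, \<phi>) h)"
  using chain_span_rel[OF chain_rels.scale_right[of as \<phi> k UNIV scM c "(+)" sc D]] assms
  by (simp add: gen_dom_def chain_equiv_def)

lemma gvec_D_entry:
  assumes "length as = k" "hom_ok k \<phi>" "i < k"
  shows "gvec (as[i := D (as ! i)], \<phi>) \<approx> (\<lambda>h. - gvec (as, lam_pull i \<phi>) h)"
  using chain_span_rel[OF chain_rels.C1[of as \<phi> k UNIV i D "(+)" sc scM]] assms
  by (simp add: gen_dom_def chain_equiv_def)

lemma gvec_funpow_D_entry: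
  assumes "length as = k" "hom_ok k \<psi>" "i < k"
  shows "gvec (as[i := (D ^^ j) (as ! i)], \<psi>) \<approx> (\<lambda>h. (-1) ^ j * gvec (as, (lam_pull i ^^ j) \<psi>) h)"
  using assms(2)
proof (induction j arbitrary: \<psi>)
  case 0
  then show ?case
    by simp
next
  case (Suc j)
  let ?as = "as[i := (D ^^ j) (as ! i)]"
  have "gvec (as[i := (D ^^ Suc j) (as ! i)], \<psi>) \<approx> (\<lambda>h. - gvec (?as, lam_pull i \<psi>) h)"
    using gvec_D_entry[of ?as \<psi> i] assms Suc.prems by simp
  also have "\<dots> \<approx> (\<lambda>h. - ((-1) ^ j * gvec (as, (lam_pull i ^^ j) (lam_pull i \<psi>)) h))"
    using chain_equiv_scale[OF Suc.IH[OF hom_ok_lam_pull[OF Suc.prems assms(3)]], of "-1"] by simp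
  also have "\<dots> = (\<lambda>h. (-1) ^ Suc j * gvec (as, (lam_pull i ^^ Suc j) \<psi>) h)"
    by (simp add: funpow_Suc_right del: funpow.simps)
  finally show ?case .
qed

lemma gvec_sum_entry:
  assumes "length as = k" "hom_ok k \<psi>" "i < k" "finite J"
  shows "gvec (as[i := \<Sum>j\<in>J. sc (c j) (v j)], \<psi>) \<approx> (\<lambda>h. \<Sum>j\<in>J. c j * gvec (as[i := v j], \<psi>) h)"
  using assms(4)
proof (induction J rule: finite_induct)
  case empty
  show ?case
    using gvec_scale_entry[OF assms(1-3), of 0 0] by simp
next
  case (insert j J)
  let ?v = "\<lambda>j. sc (c j) (v j)"
  have "gvec (as[i := \<Sum>j\<in>insert j J. ?v j], \<psi>)
      \<approx> (\<lambda>h. gvec (as[i := ?v j], \<psi>) h + gvec (as[i := \<Sum>j\<in>J. ?v j], \<psi>) h)"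
    using gvec_add_entry[OF assms(1-3)] insert.hyps by simp
  also have "\<dots> \<approx> (\<lambda>h. c j * gvec (as[i := v j], \<psi>) h + (\<Sum>j\<in>J. c j * gvec (as[i := v j], \<psi>) h))"
    by (intro chain_equiv_add gvec_scale_entry[OF assms(1-3)] insert.IH)
  also have "\<dots> = (\<lambda>h. \<Sum>j\<in>insert j J. c j * gvec (as[i := v j], \<psi>) h)"
    using insert.hyps by simp
  finally show ?case .
qed

lemma gvec_sum_hom:
  assumes "length as = k" "finite J" "\<And>j. j \<in> J \<Longrightarrow> hom_ok k (\<psi> j)"
  shows "gvec (as, \<lambda>e. \<Sum>j\<in>J. scM (c j) (\<psi> j e)) \<approx> (\<lambda>h. \<Sum>j\<in>J. c j * gvec (as, \<psi> j) h)"
  using assms(2,3)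
proof (induction J rule: finite_induct)
  case empty
  show ?case
    using gvec_scale_hom[OF assms(1), of "\<lambda>_. 0" 0] by (simp add: hom_ok_def)
next
  case (insert j J)
  let ?\<psi> = "\<lambda>e. \<Sum>j\<in>J. scM (c j) (\<psi> j e)"
  have hom_ok: "hom_ok k (\<psi> j)" "hom_ok k ?\<psi>"
    using insert.prems by (simp_all add: hom_ok_def)
  have "gvec (as, \<lambda>e. \<Sum>j\<in>insert j J. scM (c j) (\<psi> j e))
      \<approx> (\<lambda>h. gvec (as, \<lambda>e. scM (c j) (\<psi> j e)) h + gvec (as, ?\<psi>) h)"
    using gvec_add_hom[OF assms(1) hom_ok_scale[OF hom_ok(1)] hom_ok(2)] insert.hyps by simp
  also have "\<dots> \<approx> (\<lambda>h. c j * gvec (as, \<psi> j) h + (\<Sum>j\<in>J. c j * gvec (as, \<psi> j) h))"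
    using insert.prems by (intro chain_equiv_add gvec_scale_hom[OF assms(1) hom_ok(1)] insert.IH) simp
  also have "\<dots> = (\<lambda>h. \<Sum>j\<in>insert j J. c j * gvec (as, \<psi> j) h)"
    using insert.hyps by simp
  finally show ?case .
qed

lemma gvec_torsion_null:
  assumes "length as = k" "hom_ok k \<phi>" "i < k" "is_torsion sc D (as ! i)"
  shows "gvec (as, \<phi>) \<in> null_chains"
proof -
  obtain p where p: "p \<noteq> 0" "op_eval sc D p (as ! i) = 0"
    using assms(4) unfolding is_torsion_def by blast
  define b where "b j = (-1) ^ j * coeff p j" for j
  have "b (degree p) \<noteq> 0"
    using p(1) by (simp add: b_def)
  then obtain \<psi> where \<psi>: "hom_ok k \<psi>"
    and \<phi>: "(\<lambda>e. \<Sum>j\<le>degree p. scM (b j) ((lam_pull i ^^ j) \<psi> e)) = \<phi>"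
    using lam_pull_poly_surj[of scM b "degree p", OF M.vector_space_axioms _ assms(2,3)] by blast
  have "(\<lambda>_. 0) \<approx> gvec (as[i := op_eval sc D p (as ! i)], \<psi>)"
    using gvec_scale_entry[OF assms(1) \<psi> assms(3), of 0 0] p(2) by (simp add: chain_equiv_sym)
  also have "\<dots> \<approx> (\<lambda>h. \<Sum>j\<le>degree p. coeff p j * gvec (as[i := (D ^^ j) (as ! i)], \<psi>) h)"
    unfolding op_eval_def by (rule gvec_sum_entry[OF assms(1) \<psi> assms(3)]) simp
  also have "\<dots> \<approx> (\<lambda>h. \<Sum>j\<le>degree p. coeff p j * ((-1) ^ j * gvec (as, (lam_pull i ^^ j) \<psi>) h))"
    by (intro chain_equiv_sum gvec_funpow_D_entry[OF assms(1) \<psi> assms(3)]) simp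
  also have "\<dots> = (\<lambda>h. \<Sum>j\<le>degree p. b j * gvec (as, (lam_pull i ^^ j) \<psi>) h)"
    by (simp add: b_def algebra_simps)
  also have "\<dots> \<approx> gvec (as, \<phi>)"
    using gvec_sum_hom[OF assms(1), of "{..degree p}" "\<lambda>j. (lam_pull i ^^ j) \<psi>" b] \<phi> \<psi> assms(3)
    by (simp add: hom_ok_funpow_lam_pull chain_equiv_sym)
  finally show ?thesis
    by (simp add: null_chains_iff chain_equiv_sym)
qed

lemma gvec_update_torsion:
  assumes "length as = k" "hom_ok k \<phi>" "i < k" "is_torsion sc D (a - as ! i)"
  shows "gvec (as[i := a], \<phi>) \<approx> gvec (as, \<phi>)"
proof -
  have "gvec (as[i := a], \<phi>) \<approx> (\<lambda>h. gvec (as[i := as ! i], \<phi>) h + gvec (as[i := a - as ! i], \<phi>) h)"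
    using gvec_add_entry[OF assms(1-3), of "as ! i" "a - as ! i"] by simp
  also have "\<dots> \<approx> (\<lambda>h. gvec (as, \<phi>) h + 0)"
    using gvec_torsion_null[of "as[i := a - as ! i]" \<phi> i] assms
    by (intro chain_equiv_add) (simp_all add: null_chains_iff)
  finally show ?thesis
    by simp
qed

lemma gvec_tor_cls_eq:
  assumes "length as = k" "length as' = k" "hom_ok k \<phi>"
    and "map (tor_cls sc D) as = map (tor_cls sc D) as'"
  shows "gvec (as, \<phi>) \<approx> gvec (as', \<phi>)"
proof -
  have "gvec (as, \<phi>) \<approx> gvec (take m as' @ drop m as, \<phi>)" if "m \<le> k" for m
    using that
  proof (induction m)
    case 0
    then show ?case
      by simp
  next
    case (Suc m)
    let ?l = "take m as' @ drop m as"
    have "tor_cls sc D (as' ! m) = tor_cls sc D (as ! m)"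
      using assms Suc.prems by (metis Suc_le_lessD nth_map)
    then have "is_torsion sc D (as' ! m - ?l ! m)"
      using assms Suc.prems by (simp add: tor_cls_eq_iff nth_append)
    then have "gvec (?l[m := as' ! m], \<phi>) \<approx> gvec (?l, \<phi>)"
      using assms Suc.prems by (intro gvec_update_torsion) simp_all
    moreover have "?l[m := as' ! m] = take (Suc m) as' @ drop (Suc m) as"
      using assms Suc.prems
      by (simp add: list_update_append take_Suc_conv_app_nth flip: Cons_nth_drop_Suc)
    ultimately show ?case
      using Suc by (metis Suc_leD chain_equiv_sym chain_equiv_trans)
  qed
  from this[of k] show ?thesis
    using assms by simp
qed

end

section \<open>Passing to \<open>A / Tor A\<close>\<close>

lemma hom_ok_add:
  fixes \<phi> \<psi> :: "(nat \<Rightarrow> nat) \<Rightarrow> 'm::monoid_add"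
  shows "hom_ok k \<phi> \<Longrightarrow> hom_ok k \<psi> \<Longrightarrow> hom_ok k (\<lambda>e. \<phi> e + \<psi> e)"
  unfolding hom_ok_def by simp

lemma hom_ok_perm_pull:
  assumes "\<sigma> permutes {..<k}" "hom_ok k \<phi>"
  shows "hom_ok k (perm_pull \<sigma> \<phi>)"
  unfolding hom_ok_def perm_pull_def
proof (intro allI impI)
  fix e :: "nat \<Rightarrow> nat"
  assume "\<exists>j\<ge>k. e j \<noteq> 0"
  then obtain j where j: "j \<ge> k" "e j \<noteq> 0"
    by blast
  then have "inv \<sigma> j = j"
    by (intro permutes_not_in[OF permutes_inv[OF assms(1)]]) simp
  then show "\<phi> (e \<circ> inv \<sigma>) = 0"
    using assms(2) j unfolding hom_ok_def by (metis comp_apply)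
qed

lemma map_perm_list:
  assumes "\<sigma> permutes {..<k}" "length as = k"
  shows "map f (perm_list k \<sigma> as) = perm_list k \<sigma> (map f as)"
  using assms permutes_in_image[OF assms(1)] by (auto simp: perm_list_def)

context chain_space
begin

abbreviation tc :: "'a \<Rightarrow> 'a set" where
  "tc \<equiv> tor_cls sc D"

abbreviation bar_null_chains where
  "bar_null_chains \<equiv> chain_span k (range tc) (bar_add sc D) (bar_scale sc D) (bar_D sc D) scM"

lemma map_tc_inv: "set bs \<subseteq> range tc \<Longrightarrow> map (tc \<circ> inv tc) bs = bs"
  by (induction bs) (simp_all add: f_inv_into_f)

lemma chain_rels_supp:
  assumes "r \<in> chain_rels k UNIV (+) sc D scM"
  shows "finite (supp r) \<and> supp r \<subseteq> gen_dom k UNIV"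
proof -
  obtain G where "finite G" "G \<subseteq> gen_dom k UNIV" "supp r \<subseteq> G"
    using assms
  proof cases
    case (add_left as \<phi> i x y)
    then show ?thesis
      by (intro that[of "{(as[i := x + y], \<phi>), (as[i := x], \<phi>), (as[i := y], \<phi>)}"])
        (auto simp: gvec_def gen_dom_def)
  next
    case (scale_left as \<phi> i x c)
    then show ?thesis
      by (intro that[of "{(as[i := sc c x], \<phi>), (as[i := x], \<phi>)}"]) (auto simp: gvec_def gen_dom_def)
  next
    case (add_right as \<phi> \<psi>)
    then show ?thesis
      by (intro that[of "{(as, \<lambda>e. \<phi> e + \<psi> e), (as, \<phi>), (as, \<psi>)}"])
        (auto simp: gvec_def gen_dom_def hom_ok_add)
  next
    case (scale_right as \<phi> c)
    then show ?thesis
      by (intro that[of "{(as, \<lambda>e. scM c (\<phi> e)), (as, \<phi>)}"])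
        (auto simp: gvec_def gen_dom_def hom_ok_scale)
  next
    case (C1 as \<phi> i)
    then show ?thesis
      by (intro that[of "{(as[i := D (as ! i)], \<phi>), (as, lam_pull i \<phi>)}"])
        (auto simp: gvec_def gen_dom_def hom_ok_lam_pull)
  next
    case (C2 as \<phi> \<sigma>)
    then show ?thesis
      by (intro that[of "{(perm_list k \<sigma> as, perm_pull \<sigma> \<phi>), (as, \<phi>)}"])
        (auto simp: gvec_def gen_dom_def hom_ok_perm_pull perm_list_def)
  qed
  then show ?thesis
    by (auto intro: finite_subset)
qed

lemma null_chains_supp:
  "x \<in> null_chains \<Longrightarrow> finite (supp x) \<and> supp x \<subseteq> gen_dom k UNIV"
proof (induction rule: chain_span.induct)
  case zero
  then show ?case
    by simp
next
  case (step x r c)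
  then have "finite (supp r) \<and> supp r \<subseteq> gen_dom k UNIV"
    by (simp add: chain_rels_supp)
  moreover have "supp (\<lambda>h. x h + c * r h) \<subseteq> supp x \<union> supp r"
    by auto
  ultimately show ?case
    using step.IH by (auto intro: finite_subset)
qed

lemma bar_proj_chain_rel:
  assumes "r \<in> chain_rels k UNIV (+) sc D scM"
  shows "bar_proj sc D r \<in> chain_rels k (range tc) (bar_add sc D) (bar_scale sc D) (bar_D sc D) scM"
  using assms
proof cases
  case (add_left as \<phi> i x y)
  then show ?thesis
    by (simp add: bar_proj_eq_pushforward pushforward_gvec_diff_diff map_update flip: bar_add_tor_cls)
      (rule chain_rels.add_left; auto simp: gen_dom_def)
next
  case (scale_left as \<phi> i x c)
  then show ?thesis
    by (simp add: bar_proj_eq_pushforward pushforward_gvec_diff_mult map_update flip: bar_scale_tor_cls)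
      (rule chain_rels.scale_left; auto simp: gen_dom_def)
next
  case (add_right as \<phi> \<psi>)
  then show ?thesis
    by (simp add: bar_proj_eq_pushforward pushforward_gvec_diff_diff)
      (rule chain_rels.add_right; auto simp: gen_dom_def)
next
  case (scale_right as \<phi> c)
  then show ?thesis
    by (simp add: bar_proj_eq_pushforward pushforward_gvec_diff_mult)
      (rule chain_rels.scale_right; auto simp: gen_dom_def)
next
  case (C1 as \<phi> i)
  then have "tc (D (as ! i)) = bar_D sc D (map tc as ! i)"
    by (simp add: bar_D_tor_cls gen_dom_def)
  with C1 show ?thesis
    by (simp add: bar_proj_eq_pushforward pushforward_gvec_add map_update)
      (rule chain_rels.C1; auto simp: gen_dom_def)
next
  case (C2 as \<phi> \<sigma>)
  then show ?thesis
    by (simp add: bar_proj_eq_pushforward pushforward_gvec_diff_mult map_perm_list gen_dom_def)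
      (rule chain_rels.C2; auto simp: gen_dom_def)
qed

lemma chain_rel_lift:
  assumes "r \<in> chain_rels k (range tc) (bar_add sc D) (bar_scale sc D) (bar_D sc D) scM"
  shows "\<exists>r' \<in> chain_rels k UNIV (+) sc D scM. bar_proj sc D r' = r"
  using assms
proof cases
  case (add_left bs \<phi> i X Y)
  then show ?thesis
    by (intro bexI[OF _ chain_rels.add_left[of "map (inv tc) bs" \<phi> k UNIV i "inv tc X" "inv tc Y"]])
      (simp_all add: bar_proj_eq_pushforward pushforward_gvec_diff_diff map_update map_tc_inv
        f_inv_into_f gen_dom_def flip: bar_add_tor_cls)
next
  case (scale_left bs \<phi> i X c)
  then show ?thesis
    by (intro bexI[OF _ chain_rels.scale_left[of "map (inv tc) bs" \<phi> k UNIV i "inv tc X" sc c]])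
      (simp_all add: bar_proj_eq_pushforward pushforward_gvec_diff_mult map_update map_tc_inv
        f_inv_into_f gen_dom_def flip: bar_scale_tor_cls)
next
  case (add_right bs \<phi> \<psi>)
  then show ?thesis
    by (intro bexI[OF _ chain_rels.add_right[of "map (inv tc) bs" \<phi> k UNIV \<psi>]])
      (simp_all add: bar_proj_eq_pushforward pushforward_gvec_diff_diff map_tc_inv gen_dom_def)
next
  case (scale_right bs \<phi> c)
  then show ?thesis
    by (intro bexI[OF _ chain_rels.scale_right[of "map (inv tc) bs" \<phi> k UNIV]])
      (simp_all add: bar_proj_eq_pushforward pushforward_gvec_diff_mult map_tc_inv gen_dom_def)
next
  case (C1 bs \<phi> i)
  then show ?thesis
    by (intro bexI[OF _ chain_rels.C1[of "map (inv tc) bs" \<phi> k UNIV i]])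
      (simp_all add: bar_proj_eq_pushforward pushforward_gvec_add map_update map_tc_inv
        f_inv_into_f gen_dom_def subset_iff flip: bar_D_tor_cls)
next
  case (C2 bs \<phi> \<sigma>)
  then show ?thesis
    by (intro bexI[OF _ chain_rels.C2[of "map (inv tc) bs" \<phi> k UNIV \<sigma>]])
      (simp_all add: bar_proj_eq_pushforward pushforward_gvec_diff_mult map_perm_list map_tc_inv gen_dom_def)
qed

lemma bar_proj_lincomb:
  assumes "finite (supp x)" "finite (supp y)"
  shows "bar_proj sc D (\<lambda>h. x h + c * y h) = (\<lambda>b. bar_proj sc D x b + c * bar_proj sc D y b)"
  unfolding bar_proj_eq_pushforward using assms by (rule pushforward_lincomb)

lemma bar_proj_null_chains: "x \<in> null_chains \<Longrightarrow> bar_proj sc D x \<in> bar_null_chains"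
proof (induction rule: chain_span.induct)
  case zero
  then show ?case
    by (simp add: bar_proj_eq_pushforward chain_span.zero)
next
  case (step x r c)
  then show ?case
    using null_chains_supp[OF step.hyps(1)] chain_rels_supp[OF step.hyps(2)]
    by (simp add: bar_proj_lincomb chain_span.step bar_proj_chain_rel)
qed

lemma bar_null_chains_lift: "y \<in> bar_null_chains \<Longrightarrow> \<exists>z \<in> null_chains. bar_proj sc D z = y"
proof (induction rule: chain_span.induct)
  case zero
  then show ?case
    by (intro bexI[of _ "\<lambda>_. 0"] chain_span.zero) (simp add: bar_proj_eq_pushforward)
next
  case (step y r c)
  then obtain z r' where "z \<in> null_chains" "bar_proj sc D z = y"
    and "r' \<in> chain_rels k UNIV (+) sc D scM" "bar_proj sc D r' = r"
    using chain_rel_lift by blast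
  then show ?case
    using null_chains_supp chain_rels_supp
    by (intro bexI[of _ "\<lambda>h. z h + c * r' h"] chain_span.step) (simp_all add: bar_proj_lincomb)
qed

lemma null_chains_of_bar_proj_eq_0:
  assumes "finite (supp w)" "supp w \<subseteq> gen_dom k UNIV" "bar_proj sc D w = (\<lambda>_. 0)"
  shows "w \<in> null_chains"
  using assms unfolding bar_proj_eq_pushforward
proof (induction rule: pushforward_eq_0_induct)
  case zero
  then show ?case
    by (rule chain_span.zero)
next
  case (step x g g' c)
  obtain as \<phi> as' \<phi>' where g: "g = (as, \<phi>)" and g': "g' = (as', \<phi>')"
    by fastforce
  have "\<phi>' = \<phi>" "map tc as = map tc as'"
    using step.hyps(3) by (simp_all add: g g')
  then have "gvec g \<approx> gvec g'"
    using step.hyps(1,2) gvec_tor_cls_eq[of as as' \<phi>] unfolding g g' by (auto simp: gen_dom_def)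
  then show ?case
    using chain_span_lincomb[OF step.IH] by (simp add: chain_equiv_def)
qed

lemma null_chains_iff_bar_proj:
  assumes "free_elt k UNIV x"
  shows "x \<in> null_chains \<longleftrightarrow> bar_proj sc D x \<in> bar_null_chains"
proof
  assume "bar_proj sc D x \<in> bar_null_chains"
  then obtain z where z: "z \<in> null_chains" "bar_proj sc D z = bar_proj sc D x"
    using bar_null_chains_lift by blast
  have x: "finite (supp x)" "supp x \<subseteq> gen_dom k UNIV"
    using assms by (auto simp: free_elt_def)
  have z': "finite (supp z)" "supp z \<subseteq> gen_dom k UNIV"
    using null_chains_supp[OF z(1)] by auto
  define w where "w = (\<lambda>h. x h + (-1) * z h)"
  have "supp w \<subseteq> supp x \<union> supp z"
    by (auto simp: w_def)
  moreover have "bar_proj sc D w = (\<lambda>_. 0)"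
    unfolding w_def bar_proj_lincomb[OF x(1) z'(1)] z(2) by simp
  ultimately have "w \<in> null_chains"
    using x z' by (intro null_chains_of_bar_proj_eq_0) (auto intro: finite_subset)
  then have "(\<lambda>h. w h + 1 * z h) \<in> null_chains"
    using z(1) by (rule chain_span_lincomb)
  then show "x \<in> null_chains"
    by (simp add: w_def)
qed (rule bar_proj_null_chains)

lemma bar_proj_surj:
  assumes "free_elt k (range tc) y"
  shows "\<exists>x. free_elt k UNIV x \<and> bar_proj sc D x = y"
proof -
  let ?s = "map_prod (map (inv tc)) id"
  have y: "finite (supp y)" "supp y \<subseteq> gen_dom k (range tc)"
    using assms by (auto simp: free_elt_def)
  define x where "x g = (if g \<in> ?s ` supp y then y (map_prod (map tc) id g) else 0)" for g
  have "bar_proj sc D x = y"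
    unfolding bar_proj_eq_pushforward x_def
    using y by (intro pushforward_right_inverse) (auto simp: gen_dom_def map_tc_inv)
  moreover have "free_elt k UNIV x"
    using y by (auto simp: free_elt_def x_def gen_dom_def intro: finite_subset[of _ "?s ` supp y"])
  ultimately show ?thesis
    by blast
qed

end

theorem lemma3p2:
  fixes sc :: "'f::field_char_0 \<Rightarrow> 'a::ab_group_add \<Rightarrow> 'a"
    and D :: "'a \<Rightarrow> 'a" and pr :: "'a \<Rightarrow> 'a \<Rightarrow> nat \<Rightarrow> 'a"
    and scM :: "'f \<Rightarrow> 'm::ab_group_add \<Rightarrow> 'm" and DM :: "'m \<Rightarrow> 'm"
    and act :: "'a \<Rightarrow> 'm \<Rightarrow> nat \<Rightarrow> 'm"
    and k :: nat
  assumes "is_lca_module sc D pr scM DM act"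
    and "k \<ge> 1"
  shows "(\<forall>as \<phi>. (as, \<phi>) \<in> gen_dom k UNIV \<and> (\<exists>i<k. is_torsion sc D (as ! i)) \<longrightarrow>
            gvec (as, \<phi>) \<in> chain_span k UNIV (+) sc D scM)
       \<and> (\<forall>x. free_elt k UNIV x \<longrightarrow>
            (x \<in> chain_span k UNIV (+) sc D scM \<longleftrightarrow>
             bar_proj sc D x \<in> chain_span k (range (tor_cls sc D)) (bar_add sc D) (bar_scale sc D) (bar_D sc D) scM))
       \<and> (\<forall>y :: 'a set list \<times> ((nat \<Rightarrow> nat) \<Rightarrow> 'm) \<Rightarrow> 'f. free_elt k (range (tor_cls sc D)) y \<longrightarrow>
            (\<exists>x. free_elt k UNIV x \<and> bar_proj sc D x = y))"
proof -
  interpret chain_space sc D scM k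
    using assms(1)
    by (simp add: chain_space_def linear_endo_def linear_endo_axioms_def is_lca_module_def is_lca_def)
  show ?thesis
    using gvec_torsion_null null_chains_iff_bar_proj bar_proj_surj by (auto simp: gen_dom_def)
qed

end
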